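(* Let $L, M$ be complete lattices and $f:L\to M$ a complete lattice homomorphism (preserving arbitrary joins and meets). If a set filter $\mathcal{F}$ on $L$ star-converges to $x\in L$, then $f(\mathcal{F})$ star-converges to $f(x)$ in $M$.
   Context: A set filter on a set $P$ is a nonempty collection of subsets of $P$ not containing $\emptyset$, closed under finite intersections and under supersets; if $\mathcal{F}\subseteq\mathcal{G}$ are set filters, $\mathcal{G}$ is a super-filter of $\mathcal{F}$. For a subset $S$ of a poset, $S^u$ and $S^\ell$ denote the sets of upper and lower bounds of $S$. For a set filter $\mathcal{F}$ on a complete lattice $P$, put $\mathcal{F}^u=\bigcup\{F^u: F\in\mathcal{F}\}$, $\mathcal{F}^\ell=\bigcup\{F^\ell: F\in\mathcal{F}\}$; $\mathcal{F}$ order-converges to $x$, written $\mathcal{F}\to x$, if $\bigwedge\mathcal{F}^u=x=\bigvee\mathcal{F}^\ell$. $\mathcal{F}$ star-converges to $x$ if for every super-filter $\mathcal{F}'$ of $\mathcal{F}$ there is a super-filter $\mathcal{G}$ of $\mathcal{F}'$ with $\mathcal{G}\to x$. For a map $f:X\to Y$ and a set filter $\mathcal{F}$ on $X$, $f(\mathcal{F})$ is the set filter on $Y$ of all subsets of $Y$ containing $f(F)$ for some $F\in\mathcal{F}$. *)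

theory Defs
  imports Main
begin

definition set_filter :: "'a set set \<Rightarrow> bool" where
  "set_filter \<F> \<longleftrightarrow> \<F> \<noteq> {} \<and> {} \<notin> \<F>
     \<and> (\<forall>A\<in>\<F>. \<forall>B\<in>\<F>. A \<inter> B \<in> \<F>)
     \<and> (\<forall>A\<in>\<F>. \<forall>B. A \<subseteq> B \<longrightarrow> B \<in> \<F>)"

definition upper_bounds :: "'a::order set \<Rightarrow> 'a set" where
  "upper_bounds S = {y. \<forall>s\<in>S. s \<le> y}"

definition lower_bounds :: "'a::order set \<Rightarrow> 'a set" where
  "lower_bounds S = {y. \<forall>s\<in>S. y \<le> s}"

definition filter_ub :: "'a::order set set \<Rightarrow> 'a set" where
  "filter_ub \<F> = (\<Union>F\<in>\<F>. upper_bounds F)"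

definition filter_lb :: "'a::order set set \<Rightarrow> 'a set" where
  "filter_lb \<F> = (\<Union>F\<in>\<F>. lower_bounds F)"

definition order_conv :: "'a::complete_lattice set set \<Rightarrow> 'a \<Rightarrow> bool" where
  "order_conv \<F> x \<longleftrightarrow> Inf (filter_ub \<F>) = x \<and> Sup (filter_lb \<F>) = x"

definition star_conv :: "'a::complete_lattice set set \<Rightarrow> 'a \<Rightarrow> bool" where
  "star_conv \<F> x \<longleftrightarrow> (\<forall>\<F>'. set_filter \<F>' \<and> \<F> \<subseteq> \<F>' \<longrightarrow>
      (\<exists>\<G>. set_filter \<G> \<and> \<F>' \<subseteq> \<G> \<and> order_conv \<G> x))"

definition image_filter :: "('a \<Rightarrow> 'b) \<Rightarrow> 'a set set \<Rightarrow> 'b set set" where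
  "image_filter f \<F> = {B. \<exists>A\<in>\<F>. f ` A \<subseteq> B}"

definition complete_lattice_hom :: "('a::complete_lattice \<Rightarrow> 'b::complete_lattice) \<Rightarrow> bool" where
  "complete_lattice_hom f \<longleftrightarrow> (\<forall>S. f (Sup S) = Sup (f ` S)) \<and> (\<forall>S. f (Inf S) = Inf (f ` S))"

end

theory Submission
  imports Defs
begin

text \<open>Given a super-filter \<open>\<F>'\<close> of \<open>f(\<F>)\<close>, every member of \<open>\<F>\<close> meets every
  preimage of a member of \<open>\<F>'\<close>, so \<open>\<F>\<close> and \<open>f\<^sup>-\<^sup>1(\<F>')\<close> generate a common filter
  \<open>\<H>\<close>. Star convergence of \<open>\<F>\<close> gives \<open>\<G> \<supseteq> \<H>\<close> with \<open>\<G> \<rightarrow> x\<close>; then \<open>f(\<G>)\<close>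
  contains \<open>\<F>'\<close>, and since \<open>\<Sqinter>(f(\<G>))\<^sup>u = \<Sqinter>\<^bsub>A\<in>\<G>\<^esub> \<Squnion>f(A) = f(\<Sqinter>\<^bsub>A\<in>\<G>\<^esub> \<Squnion>A)\<close>
  (and dually) a complete homomorphism carries \<open>\<G> \<rightarrow> x\<close> to \<open>f(\<G>) \<rightarrow> f(x)\<close>.\<close>

definition filter_join :: "'a set set \<Rightarrow> 'a set set \<Rightarrow> 'a set set" where
  "filter_join \<F> \<G> = {A. \<exists>P\<in>\<F>. \<exists>Q\<in>\<G>. P \<inter> Q \<subseteq> A}"

lemma set_filter_filter_join:
  assumes "set_filter \<F>" and "\<G> \<noteq> {}"
    and "\<And>Q Q'. Q \<in> \<G> \<Longrightarrow> Q' \<in> \<G> \<Longrightarrow> Q \<inter> Q' \<in> \<G>"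
    and "\<And>P Q. P \<in> \<F> \<Longrightarrow> Q \<in> \<G> \<Longrightarrow> P \<inter> Q \<noteq> {}"
  shows "set_filter (filter_join \<F> \<G>)"
  unfolding set_filter_def
proof (intro conjI ballI allI impI)
  show "filter_join \<F> \<G> \<noteq> {}"
    using assms(1,2) unfolding set_filter_def filter_join_def by blast
  show "{} \<notin> filter_join \<F> \<G>"
    using assms(4) unfolding filter_join_def by blast
next
  fix A B assume "A \<in> filter_join \<F> \<G>" "B \<in> filter_join \<F> \<G>"
  then obtain P Q P' Q' where "P \<in> \<F>" "Q \<in> \<G>" "P \<inter> Q \<subseteq> A"
      and "P' \<in> \<F>" "Q' \<in> \<G>" "P' \<inter> Q' \<subseteq> B"
    unfolding filter_join_def by blast
  then have "P \<inter> P' \<in> \<F>" and "Q \<inter> Q' \<in> \<G>" and "(P \<inter> P') \<inter> (Q \<inter> Q') \<subseteq> A \<inter> B"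
    using assms(1,3) unfolding set_filter_def by auto
  then show "A \<inter> B \<in> filter_join \<F> \<G>"
    unfolding filter_join_def by blast
next
  fix A B assume "A \<in> filter_join \<F> \<G>" "A \<subseteq> B"
  then show "B \<in> filter_join \<F> \<G>"
    unfolding filter_join_def by blast
qed

lemma filter_join_upper1: "\<G> \<noteq> {} \<Longrightarrow> \<F> \<subseteq> filter_join \<F> \<G>"
  unfolding filter_join_def by blast

lemma filter_join_upper2: "\<F> \<noteq> {} \<Longrightarrow> \<G> \<subseteq> filter_join \<F> \<G>"
  unfolding filter_join_def by blast

lemma set_filter_image_filter:
  assumes "set_filter \<G>"
  shows "set_filter (image_filter f \<G>)"
  unfolding set_filter_def
proof (intro conjI ballI allI impI)
  show "image_filter f \<G> \<noteq> {}"
    using assms unfolding set_filter_def image_filter_def by blast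
  show "{} \<notin> image_filter f \<G>"
    using assms unfolding set_filter_def image_filter_def by auto
next
  fix A B assume "A \<in> image_filter f \<G>" "B \<in> image_filter f \<G>"
  then obtain P Q where "P \<in> \<G>" "f ` P \<subseteq> A" "Q \<in> \<G>" "f ` Q \<subseteq> B"
    unfolding image_filter_def by blast
  then have "P \<inter> Q \<in> \<G>" and "f ` (P \<inter> Q) \<subseteq> A \<inter> B"
    using assms unfolding set_filter_def by auto
  then show "A \<inter> B \<in> image_filter f \<G>"
    unfolding image_filter_def by blast
next
  fix A B assume "A \<in> image_filter f \<G>" "A \<subseteq> B"
  then obtain P where "P \<in> \<G>" "f ` P \<subseteq> B"
    unfolding image_filter_def by auto
  then show "B \<in> image_filter f \<G>"
    unfolding image_filter_def by blast
qed

lemma image_filter_id: "set_filter \<G> \<Longrightarrow> image_filter id \<G> = \<G>"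
  unfolding image_filter_def set_filter_def by auto

lemma preimage_meets_filter:
  assumes "set_filter \<F>'" and "image_filter f \<F> \<subseteq> \<F>'" and "P \<in> \<F>" and "B \<in> \<F>'"
  shows "P \<inter> f -` B \<noteq> {}"
proof
  assume "P \<inter> f -` B = {}"
  then have "f ` P \<inter> B = {}" by auto
  moreover have "f ` P \<in> \<F>'"
    using assms(2,3) unfolding image_filter_def by blast
  ultimately show False
    using assms(1,4) unfolding set_filter_def by metis
qed

lemma set_filter_join_preimage:
  assumes "set_filter \<F>" and "set_filter \<F>'" and "image_filter f \<F> \<subseteq> \<F>'"
  shows "set_filter (filter_join \<F> ((-`) f ` \<F>'))"
proof (rule set_filter_filter_join[OF assms(1)])
  show "(-`) f ` \<F>' \<noteq> {}"
    using assms(2) unfolding set_filter_def by blast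
next
  fix Q Q' assume "Q \<in> (-`) f ` \<F>'" "Q' \<in> (-`) f ` \<F>'"
  then obtain B B' where "B \<in> \<F>'" "B' \<in> \<F>'" "Q = f -` B" "Q' = f -` B'"
    by blast
  moreover have "B \<inter> B' \<in> \<F>'"
    using assms(2) \<open>B \<in> \<F>'\<close> \<open>B' \<in> \<F>'\<close> unfolding set_filter_def by blast
  ultimately show "Q \<inter> Q' \<in> (-`) f ` \<F>'"
    by (metis image_eqI vimage_Int)
next
  fix P Q assume "P \<in> \<F>" "Q \<in> (-`) f ` \<F>'"
  then show "P \<inter> Q \<noteq> {}"
    using preimage_meets_filter[OF assms(2,3)] by blast
qed

lemma Inf_filter_ub_image_filter:
  fixes f :: "'a \<Rightarrow> 'b::complete_lattice"
  shows "Inf (filter_ub (image_filter f \<G>)) = (INF A\<in>\<G>. Sup (f ` A))"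
proof (rule antisym)
  show "Inf (filter_ub (image_filter f \<G>)) \<le> (INF A\<in>\<G>. Sup (f ` A))"
  proof (rule INF_greatest)
    fix A assume "A \<in> \<G>"
    then have "Sup (f ` A) \<in> filter_ub (image_filter f \<G>)"
      unfolding filter_ub_def image_filter_def upper_bounds_def
      by (auto intro!: Sup_upper)
    then show "Inf (filter_ub (image_filter f \<G>)) \<le> Sup (f ` A)"
      by (rule Inf_lower)
  qed
  show "(INF A\<in>\<G>. Sup (f ` A)) \<le> Inf (filter_ub (image_filter f \<G>))"
  proof (rule Inf_greatest)
    fix y assume "y \<in> filter_ub (image_filter f \<G>)"
    then obtain A where "A \<in> \<G>" "\<forall>a\<in>A. f a \<le> y"
      unfolding filter_ub_def image_filter_def upper_bounds_def by blast
    then have "Sup (f ` A) \<le> y" by (auto intro!: Sup_least)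
    with \<open>A \<in> \<G>\<close> show "(INF A\<in>\<G>. Sup (f ` A)) \<le> y"
      by (meson INF_lower order_trans)
  qed
qed

lemma Sup_filter_lb_image_filter:
  fixes f :: "'a \<Rightarrow> 'b::complete_lattice"
  shows "Sup (filter_lb (image_filter f \<G>)) = (SUP A\<in>\<G>. Inf (f ` A))"
proof (rule antisym)
  show "(SUP A\<in>\<G>. Inf (f ` A)) \<le> Sup (filter_lb (image_filter f \<G>))"
  proof (rule SUP_least)
    fix A assume "A \<in> \<G>"
    then have "Inf (f ` A) \<in> filter_lb (image_filter f \<G>)"
      unfolding filter_lb_def image_filter_def lower_bounds_def
      by (auto intro!: Inf_lower)
    then show "Inf (f ` A) \<le> Sup (filter_lb (image_filter f \<G>))"
      by (rule Sup_upper)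
  qed
  show "Sup (filter_lb (image_filter f \<G>)) \<le> (SUP A\<in>\<G>. Inf (f ` A))"
  proof (rule Sup_least)
    fix y assume "y \<in> filter_lb (image_filter f \<G>)"
    then obtain A where "A \<in> \<G>" "\<forall>a\<in>A. y \<le> f a"
      unfolding filter_lb_def image_filter_def lower_bounds_def by blast
    then have "y \<le> Inf (f ` A)" by (auto intro!: Inf_greatest)
    with \<open>A \<in> \<G>\<close> show "y \<le> (SUP A\<in>\<G>. Inf (f ` A))"
      by (meson SUP_upper order_trans)
  qed
qed

lemma order_conv_iff_INF_SUP:
  assumes "set_filter \<G>"
  shows "order_conv \<G> x \<longleftrightarrow> (INF A\<in>\<G>. Sup A) = x \<and> (SUP A\<in>\<G>. Inf A) = x"
  using Inf_filter_ub_image_filter[of id \<G>] Sup_filter_lb_image_filter[of id \<G>]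
  unfolding order_conv_def image_filter_id[OF assms] by simp

lemma order_conv_image_filter:
  assumes f: "complete_lattice_hom f" and "set_filter \<G>" and "order_conv \<G> x"
  shows "order_conv (image_filter f \<G>) (f x)"
proof -
  have Sup_hom: "f (Sup S) = Sup (f ` S)" and Inf_hom: "f (Inf S) = Inf (f ` S)" for S
    using f unfolding complete_lattice_hom_def by auto
  have "Inf (filter_ub (image_filter f \<G>)) = (INF A\<in>\<G>. f (Sup A))"
    by (simp add: Inf_filter_ub_image_filter Sup_hom)
  also have "\<dots> = f (INF A\<in>\<G>. Sup A)"
    by (simp add: Inf_hom image_image)
  also have "\<dots> = f x"
    using order_conv_iff_INF_SUP[OF assms(2)] assms(3) by simp
  finally have ub: "Inf (filter_ub (image_filter f \<G>)) = f x" .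
  have "Sup (filter_lb (image_filter f \<G>)) = (SUP A\<in>\<G>. f (Inf A))"
    by (simp add: Sup_filter_lb_image_filter Inf_hom)
  also have "\<dots> = f (SUP A\<in>\<G>. Inf A)"
    by (simp add: Sup_hom image_image)
  also have "\<dots> = f x"
    using order_conv_iff_INF_SUP[OF assms(2)] assms(3) by simp
  finally show ?thesis
    using ub unfolding order_conv_def by simp
qed

theorem mainTheorem4:
  fixes f :: "'a::complete_lattice \<Rightarrow> 'b::complete_lattice"
    and \<F> :: "'a set set" and x :: 'a
  assumes "complete_lattice_hom f"
    and "set_filter \<F>"
    and "star_conv \<F> x"
  shows "star_conv (image_filter f \<F>) (f x)"
  unfolding star_conv_def
proof (intro allI impI, elim conjE)
  fix \<F>' assume \<F>': "set_filter \<F>'" "image_filter f \<F> \<subseteq> \<F>'"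
  define \<H> where "\<H> = filter_join \<F> ((-`) f ` \<F>')"
  have "\<F>' \<noteq> {}" and "\<F> \<noteq> {}"
    using \<F>'(1) assms(2) unfolding set_filter_def by auto
  have "set_filter \<H>"
    unfolding \<H>_def using set_filter_join_preimage[OF assms(2) \<F>'] .
  moreover have "\<F> \<subseteq> \<H>"
    unfolding \<H>_def using \<open>\<F>' \<noteq> {}\<close> by (simp add: filter_join_upper1)
  ultimately obtain \<G> where \<G>: "set_filter \<G>" "\<H> \<subseteq> \<G>" "order_conv \<G> x"
    using assms(3) unfolding star_conv_def by blast
  have "\<F>' \<subseteq> image_filter f \<G>"
  proof
    fix B assume "B \<in> \<F>'"
    then have "f -` B \<in> \<G>"
      using \<G>(2) filter_join_upper2[OF \<open>\<F> \<noteq> {}\<close>] unfolding \<H>_def by blast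
    then show "B \<in> image_filter f \<G>"
      unfolding image_filter_def by blast
  qed
  then show "\<exists>\<G>'. set_filter \<G>' \<and> \<F>' \<subseteq> \<G>' \<and> order_conv \<G>' (f x)"
    using \<G> assms(1) set_filter_image_filter order_conv_image_filter by blast
qed

end
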